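(* Let $p\colon\mathbb{R}^n\to\mathbb{R}$ be a CPWL function and let $\{\mathcal{X}_i\}_{i\in[m]}$ be a family of closed connected subsets of $\mathbb{R}^n$ with $\bigcup_{i\in[m]}\mathcal{X}_i=\mathbb{R}^n$ and $p$ affine on each $\mathcal{X}_i$, such that $m$ is the minimum number of members among all such families of closed connected subsets. Let $\{\mathcal{H}_j\}_{j\in[k]}$ be any finite family of affine subspaces of $\mathbb{R}^n$ of dimension $n-1$. Then for every $i\in[m]$, $$\mathcal{X}_i\cap\left(\mathbb{R}^n\setminus\bigcup_{j\in[k]}\mathcal{H}_j\right)\neq\emptyset.$$
   Context: A function $p\colon\mathbb{R}^n\to\mathbb{R}$ is CPWL if there are finitely many closed subsets $\mathcal{U}_1,\dots,\mathcal{U}_m$ of $\mathbb{R}^n$ with $\mathbb{R}^n=\bigcup_i\mathcal{U}_i$ and $p$ affine on each $\mathcal{U}_i$. *)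

theory Defs
  imports "HOL-Analysis.Analysis"
begin

definition affine_on :: "('a::euclidean_space \<Rightarrow> real) \<Rightarrow> 'a set \<Rightarrow> bool" where
  "affine_on p U \<longleftrightarrow> (\<exists>a b. \<forall>x\<in>U. p x = a \<bullet> x + b)"

definition cpwl :: "('a::euclidean_space \<Rightarrow> real) \<Rightarrow> bool" where
  "cpwl p \<longleftrightarrow> (\<exists>m::nat. \<exists>U::nat \<Rightarrow> 'a set.
      (\<forall>i<m. closed (U i)) \<and> (\<Union>i<m. U i) = UNIV \<and> (\<forall>i<m. affine_on p (U i)))"

definition cc_family :: "('a::euclidean_space \<Rightarrow> real) \<Rightarrow> nat \<Rightarrow> (nat \<Rightarrow> 'a set) \<Rightarrow> bool" where
  "cc_family p m X \<longleftrightarrow> (\<forall>i<m. closed (X i) \<and> connected (X i) \<and> affine_on p (X i))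
      \<and> (\<Union>i<m. X i) = UNIV"

end

theory Submission
  imports Defs
begin

text \<open>A hyperplane has empty interior, so a finite union of hyperplanes is a closed set with
empty interior. If \<open>X i\<close> avoided the complement of such a union, its interior would be empty;
the complement of \<open>X i\<close> would then be dense, and the remaining closed pieces, which cover that
complement, would cover the whole space. Deleting \<open>X i\<close> would give an admissible family with
\<open>m - 1\<close> members, contradicting minimality of \<open>m\<close>.\<close>

lemma interior_UN_closed_empty_interior:
  fixes S :: "'i \<Rightarrow> 'a::topological_space set"
  assumes "finite I" and "\<And>i. i \<in> I \<Longrightarrow> closed (S i) \<and> interior (S i) = {}"
  shows "interior (\<Union>i\<in>I. S i) = {}"
  using assms
proof (induction I rule: finite_induct)
  case (insert i I)
  then have "closed (\<Union>i\<in>I. S i)" and "interior (S i) = {}" and "interior (\<Union>i\<in>I. S i) = {}"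
    by auto
  then show ?case
    using interior_closed_Un_empty_interior[of "\<Union>i\<in>I. S i" "S i"] by (simp add: Un_commute)
qed simp

lemma interior_UN_hyperplanes_empty:
  fixes H :: "nat \<Rightarrow> 'a::euclidean_space set"
  assumes "\<And>j. j < k \<Longrightarrow> affine (H j) \<and> aff_dim (H j) = int DIM('a) - 1"
  shows "interior (\<Union>j<k. H j) = {}"
proof (rule interior_UN_closed_empty_interior)
  fix j assume "j \<in> {..<k}"
  with assms have "affine (H j)" "aff_dim (H j) \<noteq> int DIM('a)" by auto
  then show "closed (H j) \<and> interior (H j) = {}"
    using affine_closed aff_dim_nonempty_interior by blast
qed simp

lemma UN_closed_cover_remove_empty_interior:
  fixes X :: "'i \<Rightarrow> 'a::topological_space set"
  assumes "finite I" and "\<And>j. j \<in> I \<Longrightarrow> closed (X j)"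
    and "(\<Union>j\<in>I. X j) = UNIV" and "interior (X i) = {}"
  shows "(\<Union>j\<in>I - {i}. X j) = UNIV"
proof -
  have "closed (\<Union>j\<in>I - {i}. X j)"
    using assms(1,2) by (intro closed_UN) auto
  moreover have "- X i \<subseteq> (\<Union>j\<in>I - {i}. X j)"
    using assms(3) by blast
  ultimately have "closure (- X i) \<subseteq> (\<Union>j\<in>I - {i}. X j)"
    by (rule closure_minimal[rotated])
  moreover have "closure (- X i) = UNIV"
    using assms(4) by (simp add: closure_complement)
  ultimately show ?thesis by blast
qed

lemma image_skip_index_lessThan:
  assumes "i < m"
  shows "(\<lambda>j. if j < i then j else Suc j) ` {..<m - 1} = {..<m} - {i}"
proof
  show "{..<m} - {i} \<subseteq> (\<lambda>j. if j < i then j else Suc j) ` {..<m - 1}"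
  proof
    fix j assume j: "j \<in> {..<m} - {i}"
    show "j \<in> (\<lambda>j. if j < i then j else Suc j) ` {..<m - 1}"
    proof (cases "j < i")
      case True
      then show ?thesis using assms by (intro image_eqI[of _ _ j]) auto
    next
      case False
      then show ?thesis using j by (intro image_eqI[of _ _ "j - 1"]) auto
    qed
  qed
qed (use assms in auto)

lemma cc_family_remove:
  assumes "cc_family p m X" and "i < m" and "(\<Union>j\<in>{..<m} - {i}. X j) = UNIV"
  shows "cc_family p (m - 1) (\<lambda>j. if j < i then X j else X (Suc j))"
proof -
  have "(\<Union>j<m - 1. if j < i then X j else X (Suc j))
      = (\<Union>j\<in>(\<lambda>j. if j < i then j else Suc j) ` {..<m - 1}. X j)"
    by (auto simp: if_distrib)
  also have "\<dots> = UNIV"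
    using assms(3) by (simp only: image_skip_index_lessThan[OF assms(2)])
  finally show ?thesis
    using assms(1,2) unfolding cc_family_def by auto
qed

theorem lemma13:
  fixes p :: "'a::euclidean_space \<Rightarrow> real"
    and X :: "nat \<Rightarrow> 'a set" and m :: nat
    and H :: "nat \<Rightarrow> 'a set" and k :: nat
  assumes "cpwl p"
    and "cc_family p m X"
    and "\<And>m' Y. cc_family p m' Y \<Longrightarrow> m \<le> m'"
    and "\<And>j. j < k \<Longrightarrow> affine (H j) \<and> aff_dim (H j) = int DIM('a) - 1"
  shows "\<forall>i<m. X i \<inter> (UNIV - (\<Union>j<k. H j)) \<noteq> {}"
proof (intro allI impI notI)
  fix i assume "i < m" and "X i \<inter> (UNIV - (\<Union>j<k. H j)) = {}"
  then have "interior (X i) \<subseteq> interior (\<Union>j<k. H j)"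
    by (intro interior_mono) blast
  moreover have "interior (\<Union>j<k. H j) = {}"
    using assms(4) by (rule interior_UN_hyperplanes_empty)
  ultimately have "interior (X i) = {}"
    by blast
  moreover have "\<And>j. j < m \<Longrightarrow> closed (X j)" and "(\<Union>j<m. X j) = UNIV"
    using assms(2) unfolding cc_family_def by auto
  ultimately have "(\<Union>j\<in>{..<m} - {i}. X j) = UNIV"
    by (intro UN_closed_cover_remove_empty_interior) auto
  then have "cc_family p (m - 1) (\<lambda>j. if j < i then X j else X (Suc j))"
    using cc_family_remove assms(2) \<open>i < m\<close> by blast
  then have "m \<le> m - 1"
    by (rule assms(3))
  with \<open>i < m\<close> show False by simp
qed

end
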